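(* Let $\mathcal{C}$ be a locally small, strongly amendable category (having the pullbacks and pushouts required for PBPO and PBPO$^{+}$ rules and steps) in which every morphism can be factored as an epimorphism followed by a monomorphism. Then for every PBPO rule $\rho$ there exists a set $T$ of PBPO$^{+}$ rules such that ${\Rightarrow^{\mathrm{PBPO}}_\rho} = \bigcup\{ {\Rightarrow^{\mathrm{PBPO}^{+}}_\tau} \mid \tau \in T\}$.
   Context: A PBPO rule consists of morphisms $l : K \to L$, $r : K \to R$, $t_L : L \to L'$, $t_K : K \to K'$, $t_R : R \to R'$, $l' : K' \to L'$, $r' : K' \to R'$ with $t_L \circ l = l' \circ t_K$ and $t_R \circ r = r' \circ t_K$. A PBPO step $G_L \Rightarrow_\rho^{m,\alpha} G_R$ consists of $m : L \to G_L$, $\alpha : G_L \to L'$ with $t_L = \alpha \circ m$; a pullback $G_L \xleftarrow{g_L} G_K \xrightarrow{u'} K'$ of $\alpha$ and $l'$; the unique $u : K \to G_K$ with $g_L \circ u = m \circ l$ and $u' \circ u = t_K$; a pushout $G_K \xrightarrow{g_R} G_R \xleftarrow{w} R$ of $u$ and $r$; and the unique $w' : G_R \to R'$ with $w' \circ g_R = r' \circ u'$ and $w' \circ w = t_R$. ${\Rightarrow^{\mathrm{PBPO}}_\rho}$ relates $G_L$ to $G_R$ if such a step exists for some $m,\alpha$. A PBPO$^{+}$ rule consists of $l : K \to L$, $r : K \to R$, monomorphisms $t_L : L \rightarrowtail L'$, $t_K : K \rightarrowtail K'$ and $l' : K' \to L'$ such that $(l,t_K)$ is a pullback of $(t_L,l')$.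 $G_L \Rightarrow^{\mathrm{PBPO}^{+}}_\tau G_R$ holds if there are $\alpha : G_L \to L'$ and $m : L \to G_L$ with $L \xleftarrow{1_L} L \xrightarrow{m} G_L$ a pullback of $t_L$ and $\alpha$; a pullback $G_L \xleftarrow{g_L} G_K \xrightarrow{u'} K'$ of $\alpha$ and $l'$; the unique $u : K \to G_K$ with $t_K = u' \circ u$; and a pushout $G_K \xrightarrow{g_R} G_R \xleftarrow{w} R$ of $u$ and $r$. A category is amendable if for every $t_L : L \to L'$ there is a factorization $t_L = \beta \circ t_L'$ with $t_L' : L \rightarrowtail L''$ mono such that for every factorization $t_L = \alpha \circ m$ with $m$ mono there exists $\alpha' : G_L \to L''$ with $\alpha' \circ m = t_L'$ and $\beta \circ \alpha' = \alpha$; it is strongly amendable if $(t_L',\beta)$ can be chosen so that moreover, in each case, $L \xleftarrow{1_L} L \xrightarrow{m} G_L$ is a pullback of $t_L'$ and $\alpha'$. *)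

theory Defs
  imports Main
begin

record ('o, 'a) cat =
  Obj  :: "'o set"
  Arr  :: "'a set"
  Dom  :: "'a \<Rightarrow> 'o"
  Cod  :: "'a \<Rightarrow> 'o"
  Idt  :: "'o \<Rightarrow> 'a"
  Cmp  :: "'a \<Rightarrow> 'a \<Rightarrow> 'a"   (* Cmp C g f = g \<circ> f, defined when Cod f = Dom g *)

definition hom :: "('o,'a) cat \<Rightarrow> 'a \<Rightarrow> 'o \<Rightarrow> 'o \<Rightarrow> bool" where
  "hom C f X Y \<longleftrightarrow> f \<in> Arr C \<and> Dom C f = X \<and> Cod C f = Y"

definition is_category :: "('o,'a) cat \<Rightarrow> bool" where
  "is_category C \<longleftrightarrow>
     (\<forall>f\<in>Arr C. Dom C f \<in> Obj C \<and> Cod C f \<in> Obj C) \<and>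
     (\<forall>X\<in>Obj C. hom C (Idt C X) X X) \<and>
     (\<forall>f g. f \<in> Arr C \<longrightarrow> g \<in> Arr C \<longrightarrow> Cod C f = Dom C g \<longrightarrow>
            hom C (Cmp C g f) (Dom C f) (Cod C g)) \<and>
     (\<forall>f\<in>Arr C. Cmp C f (Idt C (Dom C f)) = f \<and> Cmp C (Idt C (Cod C f)) f = f) \<and>
     (\<forall>f g h. f \<in> Arr C \<longrightarrow> g \<in> Arr C \<longrightarrow> h \<in> Arr C \<longrightarrow>
            Cod C f = Dom C g \<longrightarrow> Cod C g = Dom C h \<longrightarrow>
            Cmp C h (Cmp C g f) = Cmp C (Cmp C h g) f)"

definition mono :: "('o,'a) cat \<Rightarrow> 'a \<Rightarrow> bool" where
  "mono C m \<longleftrightarrow> m \<in> Arr C \<and>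
     (\<forall>f g. f \<in> Arr C \<longrightarrow> g \<in> Arr C \<longrightarrow> Cod C f = Dom C m \<longrightarrow> Cod C g = Dom C m \<longrightarrow>
            Dom C f = Dom C g \<longrightarrow> Cmp C m f = Cmp C m g \<longrightarrow> f = g)"

definition epi :: "('o,'a) cat \<Rightarrow> 'a \<Rightarrow> bool" where
  "epi C e \<longleftrightarrow> e \<in> Arr C \<and>
     (\<forall>f g. f \<in> Arr C \<longrightarrow> g \<in> Arr C \<longrightarrow> Dom C f = Cod C e \<longrightarrow> Dom C g = Cod C e \<longrightarrow>
            Cod C f = Cod C g \<longrightarrow> Cmp C f e = Cmp C g e \<longrightarrow> f = g)"

text \<open>The span  A <-p1- P -p2-> B  is a pullback of the cospan  A -f-> Z <-g- B.\<close>
definition is_pullback :: "('o,'a) cat \<Rightarrow> 'a \<Rightarrow> 'a \<Rightarrow> 'a \<Rightarrow> 'a \<Rightarrow> bool" where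
  "is_pullback C f g p1 p2 \<longleftrightarrow>
     f \<in> Arr C \<and> g \<in> Arr C \<and> Cod C f = Cod C g \<and>
     hom C p1 (Dom C p1) (Dom C f) \<and> hom C p2 (Dom C p1) (Dom C g) \<and>
     Cmp C f p1 = Cmp C g p2 \<and>
     (\<forall>q1 q2. hom C q1 (Dom C q1) (Dom C f) \<longrightarrow> hom C q2 (Dom C q1) (Dom C g) \<longrightarrow>
        Cmp C f q1 = Cmp C g q2 \<longrightarrow>
        (\<exists>!v. hom C v (Dom C q1) (Dom C p1) \<and> Cmp C p1 v = q1 \<and> Cmp C p2 v = q2))"

text \<open>The cospan  A -q1-> Q <-q2- B  is a pushout of the span  A <-f- X -g-> B.\<close>
definition is_pushout :: "('o,'a) cat \<Rightarrow> 'a \<Rightarrow> 'a \<Rightarrow> 'a \<Rightarrow> 'a \<Rightarrow> bool" where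
  "is_pushout C f g q1 q2 \<longleftrightarrow>
     f \<in> Arr C \<and> g \<in> Arr C \<and> Dom C f = Dom C g \<and>
     hom C q1 (Cod C f) (Cod C q1) \<and> hom C q2 (Cod C g) (Cod C q1) \<and>
     Cmp C q1 f = Cmp C q2 g \<and>
     (\<forall>s1 s2. hom C s1 (Cod C f) (Cod C s1) \<longrightarrow> hom C s2 (Cod C g) (Cod C s1) \<longrightarrow>
        Cmp C s1 f = Cmp C s2 g \<longrightarrow>
        (\<exists>!v. hom C v (Cod C q1) (Cod C s1) \<and> Cmp C v q1 = s1 \<and> Cmp C v q2 = s2))"

definition has_pullbacks :: "('o,'a) cat \<Rightarrow> bool" where
  "has_pullbacks C \<longleftrightarrow> (\<forall>f g. f \<in> Arr C \<longrightarrow> g \<in> Arr C \<longrightarrow> Cod C f = Cod C g \<longrightarrow>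
      (\<exists>p1 p2. is_pullback C f g p1 p2))"

definition has_pushouts :: "('o,'a) cat \<Rightarrow> bool" where
  "has_pushouts C \<longleftrightarrow> (\<forall>f g. f \<in> Arr C \<longrightarrow> g \<in> Arr C \<longrightarrow> Dom C f = Dom C g \<longrightarrow>
      (\<exists>q1 q2. is_pushout C f g q1 q2))"

definition epi_mono_factorizations :: "('o,'a) cat \<Rightarrow> bool" where
  "epi_mono_factorizations C \<longleftrightarrow> (\<forall>f\<in>Arr C. \<exists>e m. epi C e \<and> mono C m \<and>
      Cod C e = Dom C m \<and> f = Cmp C m e)"

definition amendable :: "('o,'a) cat \<Rightarrow> bool" where
  "amendable C \<longleftrightarrow> (\<forall>tL\<in>Arr C. \<exists>tL' \<beta>.
     mono C tL' \<and> Dom C tL' = Dom C tL \<and> hom C \<beta> (Cod C tL') (Cod C tL) \<and>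
     tL = Cmp C \<beta> tL' \<and>
     (\<forall>m \<alpha>. mono C m \<and> Dom C m = Dom C tL \<and> hom C \<alpha> (Cod C m) (Cod C tL) \<and>
            tL = Cmp C \<alpha> m \<longrightarrow>
        (\<exists>\<alpha>'. hom C \<alpha>' (Cod C m) (Cod C tL') \<and> Cmp C \<alpha>' m = tL' \<and> Cmp C \<beta> \<alpha>' = \<alpha>)))"

definition strongly_amendable :: "('o,'a) cat \<Rightarrow> bool" where
  "strongly_amendable C \<longleftrightarrow> (\<forall>tL\<in>Arr C. \<exists>tL' \<beta>.
     mono C tL' \<and> Dom C tL' = Dom C tL \<and> hom C \<beta> (Cod C tL') (Cod C tL) \<and>
     tL = Cmp C \<beta> tL' \<and>
     (\<forall>m \<alpha>. mono C m \<and> Dom C m = Dom C tL \<and> hom C \<alpha> (Cod C m) (Cod C tL) \<and>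
            tL = Cmp C \<alpha> m \<longrightarrow>
        (\<exists>\<alpha>'. hom C \<alpha>' (Cod C m) (Cod C tL') \<and> Cmp C \<alpha>' m = tL' \<and> Cmp C \<beta> \<alpha>' = \<alpha> \<and>
              is_pullback C tL' \<alpha>' (Idt C (Dom C tL)) m)))"

record 'a pbpo_rule =
  pl  :: 'a   (* l  : K  -> L  *)
  pr  :: 'a   (* r  : K  -> R  *)
  ptL :: 'a   (* tL : L  -> L' *)
  ptK :: 'a   (* tK : K  -> K' *)
  ptR :: 'a   (* tR : R  -> R' *)
  pl' :: 'a   (* l' : K' -> L' *)
  pr' :: 'a   (* r' : K' -> R' *)

definition is_pbpo_rule :: "('o,'a) cat \<Rightarrow> 'a pbpo_rule \<Rightarrow> bool" where
  "is_pbpo_rule C \<rho> \<longleftrightarrow>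
     (let l = pl \<rho>; r = pr \<rho>; tL = ptL \<rho>; tK = ptK \<rho>; tR = ptR \<rho>; l' = pl' \<rho>; r' = pr' \<rho>;
          K = Dom C l; L = Cod C l; R = Cod C r; L' = Cod C tL; K' = Cod C tK; R' = Cod C tR in
      hom C l K L \<and> hom C r K R \<and> hom C tL L L' \<and> hom C tK K K' \<and> hom C tR R R' \<and>
      hom C l' K' L' \<and> hom C r' K' R' \<and>
      Cmp C tL l = Cmp C l' tK \<and> Cmp C tR r = Cmp C r' tK)"

definition pbpo_step :: "('o,'a) cat \<Rightarrow> 'a pbpo_rule \<Rightarrow> 'o \<Rightarrow> 'o \<Rightarrow> bool" where
  "pbpo_step C \<rho> GL GR \<longleftrightarrow>
     (let l = pl \<rho>; r = pr \<rho>; tL = ptL \<rho>; tK = ptK \<rho>; tR = ptR \<rho>; l' = pl' \<rho>; r' = pr' \<rho>;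
          K = Dom C l; L = Cod C l; R = Cod C r; L' = Cod C tL; K' = Cod C tK; R' = Cod C tR in
      \<exists>m \<alpha> gL u' u gR w w'.
        hom C m L GL \<and> hom C \<alpha> GL L' \<and> tL = Cmp C \<alpha> m \<and>
        is_pullback C \<alpha> l' gL u' \<and>
        hom C u K (Dom C gL) \<and> Cmp C gL u = Cmp C m l \<and> Cmp C u' u = tK \<and>
        is_pushout C u r gR w \<and> Cod C gR = GR \<and>
        hom C w' GR R' \<and> Cmp C w' gR = Cmp C r' u' \<and> Cmp C w' w = tR)"

record 'a pbpop_rule =
  ql  :: 'a   (* l  : K  -> L  *)
  qr  :: 'a   (* r  : K  -> R  *)
  qtL :: 'a   (* tL : L  >-> L' (mono) *)
  qtK :: 'a   (* tK : K  >-> K' (mono) *)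
  ql' :: 'a   (* l' : K' -> L' *)

definition is_pbpop_rule :: "('o,'a) cat \<Rightarrow> 'a pbpop_rule \<Rightarrow> bool" where
  "is_pbpop_rule C \<tau> \<longleftrightarrow>
     (let l = ql \<tau>; r = qr \<tau>; tL = qtL \<tau>; tK = qtK \<tau>; l' = ql' \<tau>;
          K = Dom C l; L = Cod C l; R = Cod C r; L' = Cod C tL; K' = Cod C tK in
      hom C l K L \<and> hom C r K R \<and> hom C tL L L' \<and> hom C tK K K' \<and> hom C l' K' L' \<and>
      mono C tL \<and> mono C tK \<and> is_pullback C tL l' l tK)"

definition pbpop_step :: "('o,'a) cat \<Rightarrow> 'a pbpop_rule \<Rightarrow> 'o \<Rightarrow> 'o \<Rightarrow> bool" where
  "pbpop_step C \<tau> GL GR \<longleftrightarrow>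
     (let l = ql \<tau>; r = qr \<tau>; tL = qtL \<tau>; tK = qtK \<tau>; l' = ql' \<tau>;
          K = Dom C l; L = Cod C l; L' = Cod C tL in
      \<exists>\<alpha> m gL u' u gR w.
        hom C \<alpha> GL L' \<and> hom C m L GL \<and>
        is_pullback C tL \<alpha> (Idt C L) m \<and>
        is_pullback C \<alpha> l' gL u' \<and>
        hom C u K (Dom C gL) \<and> Cmp C u' u = tK \<and>
        (\<forall>v. hom C v K (Dom C gL) \<and> Cmp C u' v = tK \<longrightarrow> v = u) \<and>
        is_pushout C u r gR w \<and> Cod C gR = GR)"

end

(*
  Every PBPO step of rho is a PBPO+ step of a rule obtained from rho by one construction, and
  conversely. Factor the match as m = m' o e with m' mono, and amend the type alpha o m' of the
  image of L to a mono tL0 : L0 >-> L0' followed by beta : L0' -> L'. Pulling l' back along beta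
  and then along tL0, and pushing r out along the induced K -> K0, yields a PBPO+ rule. Strong
  amendability makes (1, m') a pullback of tL0 and the amended typing alpha', so m' is a PBPO+
  match of that rule; pasting and cancellation of pullbacks and pushouts then turn the squares of
  either step into those of the other. T is the set of all rules obtained in this way.
*)

theory Submission
  imports Defs
begin

section \<open>Pullbacks and pushouts\<close>

lemma hom_Dom_Cod: "f \<in> Arr C \<Longrightarrow> hom C f (Dom C f) (Cod C f)"
  by (simp add: hom_def)

lemma pullbackD:
  assumes "is_pullback C f g p1 p2"
  shows "f \<in> Arr C" "g \<in> Arr C" "Cod C f = Cod C g" "hom C p1 (Dom C p1) (Dom C f)"
    "hom C p2 (Dom C p1) (Dom C g)" "Cmp C f p1 = Cmp C g p2"
  using assms by (auto simp: is_pullback_def)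

lemma pullback_lift:
  assumes "is_pullback C f g p1 p2" "hom C f A Z" "hom C g B Z" "hom C q1 X A" "hom C q2 X B"
    "Cmp C f q1 = Cmp C g q2"
  obtains v where "hom C v X (Dom C p1)" "Cmp C p1 v = q1" "Cmp C p2 v = q2"
proof -
  have "Dom C q1 = X" "A = Dom C f" "B = Dom C g" using assms(2-4) by (simp_all add: hom_def)
  then show ?thesis using assms that unfolding is_pullback_def by metis
qed

lemma pullbackI:
  assumes "f \<in> Arr C" "g \<in> Arr C" "Cod C f = Cod C g" "hom C p1 P (Dom C f)"
    "hom C p2 P (Dom C g)" "Cmp C f p1 = Cmp C g p2"
    and lift: "\<And>q1 q2 X. hom C q1 X (Dom C f) \<Longrightarrow> hom C q2 X (Dom C g) \<Longrightarrow>
      Cmp C f q1 = Cmp C g q2 \<Longrightarrow> \<exists>v. hom C v X P \<and> Cmp C p1 v = q1 \<and> Cmp C p2 v = q2"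
    and unique: "\<And>v v' X. hom C v X P \<Longrightarrow> hom C v' X P \<Longrightarrow> Cmp C p1 v = Cmp C p1 v' \<Longrightarrow>
      Cmp C p2 v = Cmp C p2 v' \<Longrightarrow> v = v'"
  shows "is_pullback C f g p1 p2"
proof -
  have "Dom C p1 = P" using assms(4) by (simp add: hom_def)
  then show ?thesis
    unfolding is_pullback_def using assms(1-6) lift unique by metis
qed

lemma has_pullbacksE:
  assumes "has_pullbacks C" "hom C f A Z" "hom C g B Z"
  obtains p1 p2 where "is_pullback C f g p1 p2"
  using assms unfolding has_pullbacks_def hom_def by metis

lemma has_pushoutsE:
  assumes "has_pushouts C" "hom C f Z A" "hom C g Z B"
  obtains q1 q2 where "is_pushout C f g q1 q2"
  using assms unfolding has_pushouts_def hom_def by metis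

definition op_cat :: "('o, 'a) cat \<Rightarrow> ('o, 'a) cat" where
  "op_cat C = \<lparr>Obj = Obj C, Arr = Arr C, Dom = Cod C, Cod = Dom C, Idt = Idt C,
     Cmp = (\<lambda>g f. Cmp C f g)\<rparr>"

lemma op_cat_simps [simp]:
  "Obj (op_cat C) = Obj C" "Arr (op_cat C) = Arr C" "Dom (op_cat C) = Cod C"
  "Cod (op_cat C) = Dom C" "Idt (op_cat C) = Idt C" "Cmp (op_cat C) g f = Cmp C f g"
  by (simp_all add: op_cat_def)

lemma hom_op_cat [simp]: "hom (op_cat C) f X Y \<longleftrightarrow> hom C f Y X"
  by (auto simp: hom_def)

lemma is_pushout_iff_pullback_op: "is_pushout C f g q1 q2 \<longleftrightarrow> is_pullback (op_cat C) f g q1 q2"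
  unfolding is_pushout_def is_pullback_def by simp

lemma pushoutD:
  assumes "is_pushout C f g q1 q2"
  shows "f \<in> Arr C" "g \<in> Arr C" "Dom C f = Dom C g" "hom C q1 (Cod C f) (Cod C q1)"
    "hom C q2 (Cod C g) (Cod C q1)" "Cmp C q1 f = Cmp C q2 g"
  using assms by (auto simp: is_pushout_def)

lemma pushout_lift:
  assumes "is_pushout C f g q1 q2" "hom C f Z A" "hom C g Z B" "hom C s1 A X" "hom C s2 B X"
    "Cmp C s1 f = Cmp C s2 g"
  obtains v where "hom C v (Cod C q1) X" "Cmp C v q1 = s1" "Cmp C v q2 = s2"
  using pullback_lift[of "op_cat C" f g q1 q2 A Z B s1 X s2] assms
  by (auto simp: is_pushout_iff_pullback_op)

locale category =
  fixes C :: "('o, 'a) cat"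
  assumes is_category: "is_category C"
begin

abbreviation comp :: "'a \<Rightarrow> 'a \<Rightarrow> 'a"  (infixr "\<cdot>" 55)
  where "g \<cdot> f \<equiv> Cmp C g f"

lemma comp_in_hom: "hom C f X Y \<Longrightarrow> hom C g Y Z \<Longrightarrow> hom C (g \<cdot> f) X Z"
  using is_category by (auto simp: is_category_def hom_def)

lemma comp_assoc: "hom C f X Y \<Longrightarrow> hom C g Y Z \<Longrightarrow> hom C h Z W \<Longrightarrow> (h \<cdot> g) \<cdot> f = h \<cdot> g \<cdot> f"
  using is_category by (auto simp: is_category_def hom_def)

lemma Idt_Dom_in_hom: "hom C f X Y \<Longrightarrow> hom C (Idt C X) X X"
  using is_category by (auto simp: is_category_def hom_def)

lemma comp_Idt_left: "hom C f X Y \<Longrightarrow> Idt C Y \<cdot> f = f"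
  using is_category by (auto simp: is_category_def hom_def)

lemma comp_Idt_right: "hom C f X Y \<Longrightarrow> f \<cdot> Idt C X = f"
  using is_category by (auto simp: is_category_def hom_def)

lemma category_op_cat: "category (op_cat C)"
  using is_category unfolding category_def is_category_def by (auto simp: hom_def)

lemma pullback_lift_unique:
  assumes P: "is_pullback C f g p1 p2"
    and v: "hom C v X (Dom C p1)" and v': "hom C v' X (Dom C p1)"
    and "p1 \<cdot> v = p1 \<cdot> v'" and "p2 \<cdot> v = p2 \<cdot> v'"
  shows "v = v'"
proof -
  note P1 = pullbackD[OF P]
  have h1: "hom C (p1 \<cdot> v) X (Dom C f)" and h2: "hom C (p2 \<cdot> v) X (Dom C g)"
    using comp_in_hom[OF v P1(4)] comp_in_hom[OF v P1(5)] .
  have "f \<cdot> p1 \<cdot> v = g \<cdot> p2 \<cdot> v"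
    using comp_assoc[OF v P1(4) hom_Dom_Cod[OF P1(1)]] comp_assoc[OF v P1(5) hom_Dom_Cod[OF P1(2)]]
      P1(3,6) by metis
  moreover have "Dom C (p1 \<cdot> v) = X" using h1 by (simp add: hom_def)
  ultimately have "\<exists>!z. hom C z X (Dom C p1) \<and> p1 \<cdot> z = p1 \<cdot> v \<and> p2 \<cdot> z = p2 \<cdot> v"
    using P h1 h2 unfolding is_pullback_def by metis
  then show ?thesis using assms by metis
qed

lemma pullback_paste:
  assumes right: "is_pullback C g h q1 q2" and left: "is_pullback C f q1 p1 p2"
    and f: "hom C f A (Dom C g)"
  shows "is_pullback C (g \<cdot> f) h p1 (q2 \<cdot> p2)"
proof -
  note R = pullbackD[OF right] and L = pullbackD[OF left]
  have p1: "hom C p1 (Dom C p1) A" using L(4) f by (simp add: hom_def)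
  have p2: "hom C p2 (Dom C p1) (Dom C q1)" using L(5) .
  have q1: "hom C q1 (Dom C q1) (Dom C g)" and q2: "hom C q2 (Dom C q1) (Dom C h)"
    using R(4,5) .
  have g: "hom C g (Dom C g) (Cod C g)" and h: "hom C h (Dom C h) (Cod C g)"
    using hom_Dom_Cod[OF R(1)] hom_Dom_Cod[OF R(2)] R(3) by simp_all
  have gf: "hom C (g \<cdot> f) A (Cod C g)" using comp_in_hom[OF f g] .
  show ?thesis
  proof (rule pullbackI)
    show "g \<cdot> f \<in> Arr C" "Cod C (g \<cdot> f) = Cod C h" "hom C p1 (Dom C p1) (Dom C (g \<cdot> f))"
      using gf h p1 by (simp_all add: hom_def)
    show "h \<in> Arr C" by (rule R(2))
    show "hom C (q2 \<cdot> p2) (Dom C p1) (Dom C h)" using comp_in_hom[OF p2 q2] .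
    show "(g \<cdot> f) \<cdot> p1 = h \<cdot> q2 \<cdot> p2"
      by (metis comp_assoc[OF p1 f g] comp_assoc[OF p2 q1 g] comp_assoc[OF p2 q2 h] L(6) R(6))
  next
    fix a b X
    assume a: "hom C a X (Dom C (g \<cdot> f))" and b: "hom C b X (Dom C h)"
      and ab: "(g \<cdot> f) \<cdot> a = h \<cdot> b"
    have a': "hom C a X A" using a gf by (simp add: hom_def)
    have "g \<cdot> f \<cdot> a = h \<cdot> b" using ab comp_assoc[OF a' f g] by simp
    then obtain w where w: "hom C w X (Dom C q1)" "q1 \<cdot> w = f \<cdot> a" "q2 \<cdot> w = b"
      using pullback_lift[OF right g h comp_in_hom[OF a' f] b] by blast
    obtain v where v: "hom C v X (Dom C p1)" "p1 \<cdot> v = a" "p2 \<cdot> v = w"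
      using pullback_lift[OF left f q1 a' w(1) w(2)[symmetric]] by blast
    have "(q2 \<cdot> p2) \<cdot> v = b" using comp_assoc[OF v(1) p2 q2] v(3) w(3) by simp
    then show "\<exists>v. hom C v X (Dom C p1) \<and> p1 \<cdot> v = a \<and> (q2 \<cdot> p2) \<cdot> v = b"
      using v by blast
  next
    fix v v' X
    assume v: "hom C v X (Dom C p1)" and v': "hom C v' X (Dom C p1)"
      and eq1: "p1 \<cdot> v = p1 \<cdot> v'" and eq2: "(q2 \<cdot> p2) \<cdot> v = (q2 \<cdot> p2) \<cdot> v'"
    have "q1 \<cdot> p2 \<cdot> v = q1 \<cdot> p2 \<cdot> v'"
      by (metis comp_assoc[OF v p2 q1] comp_assoc[OF v' p2 q1] comp_assoc[OF v p1 f]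
          comp_assoc[OF v' p1 f] L(6) eq1)
    moreover have "q2 \<cdot> p2 \<cdot> v = q2 \<cdot> p2 \<cdot> v'"
      using comp_assoc[OF v p2 q2] comp_assoc[OF v' p2 q2] eq2 by simp
    ultimately have "p2 \<cdot> v = p2 \<cdot> v'"
      using pullback_lift_unique[OF right comp_in_hom[OF v p2] comp_in_hom[OF v' p2]] by blast
    then show "v = v'" using pullback_lift_unique[OF left v v' eq1] by blast
  qed
qed

lemma pullback_cancel:
  assumes right: "is_pullback C g h q1 q2" and outer: "is_pullback C (g \<cdot> f) h p1 p2'"
    and f: "hom C f A (Dom C g)"
    and v: "hom C v (Dom C p1) (Dom C q1)" "q1 \<cdot> v = f \<cdot> p1" "q2 \<cdot> v = p2'"
  shows "is_pullback C f q1 p1 v"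
proof -
  note R = pullbackD[OF right] and O = pullbackD[OF outer]
  have q1: "hom C q1 (Dom C q1) (Dom C g)" and q2: "hom C q2 (Dom C q1) (Dom C h)"
    using R(4,5) .
  have g: "hom C g (Dom C g) (Cod C g)" and h: "hom C h (Dom C h) (Cod C g)"
    using hom_Dom_Cod[OF R(1)] hom_Dom_Cod[OF R(2)] R(3) by simp_all
  have gf: "hom C (g \<cdot> f) A (Cod C g)" using comp_in_hom[OF f g] .
  have p1: "hom C p1 (Dom C p1) A" using O(4) gf by (simp add: hom_def)
  show ?thesis
  proof (rule pullbackI)
    show "f \<in> Arr C" "q1 \<in> Arr C" "Cod C f = Cod C q1" "hom C p1 (Dom C p1) (Dom C f)"
      using f q1 p1 by (simp_all add: hom_def)
    show "hom C v (Dom C p1) (Dom C q1)" "f \<cdot> p1 = q1 \<cdot> v" using v(1,2) by simp_all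
  next
    fix a b X
    assume a: "hom C a X (Dom C f)" and b: "hom C b X (Dom C q1)" and ab: "f \<cdot> a = q1 \<cdot> b"
    have a': "hom C a X A" using a f by (simp add: hom_def)
    have "(g \<cdot> f) \<cdot> a = h \<cdot> q2 \<cdot> b"
      by (metis comp_assoc[OF a' f g] comp_assoc[OF b q1 g] comp_assoc[OF b q2 h] R(6) ab)
    then obtain z where z: "hom C z X (Dom C p1)" "p1 \<cdot> z = a" "p2' \<cdot> z = q2 \<cdot> b"
      using pullback_lift[OF outer gf h a' comp_in_hom[OF b q2]] by blast
    have "v \<cdot> z = b"
    proof (rule pullback_lift_unique[OF right comp_in_hom[OF z(1) v(1)] b])
      show "q1 \<cdot> v \<cdot> z = q1 \<cdot> b"
        by (metis comp_assoc[OF z(1) v(1) q1] v(2) comp_assoc[OF z(1) p1 f] z(2) ab)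
      show "q2 \<cdot> v \<cdot> z = q2 \<cdot> b"
        by (metis comp_assoc[OF z(1) v(1) q2] v(3) z(3))
    qed
    then show "\<exists>z. hom C z X (Dom C p1) \<and> p1 \<cdot> z = a \<and> v \<cdot> z = b" using z by blast
  next
    fix z z' X
    assume z: "hom C z X (Dom C p1)" and z': "hom C z' X (Dom C p1)"
      and eq1: "p1 \<cdot> z = p1 \<cdot> z'" and eq2: "v \<cdot> z = v \<cdot> z'"
    have "p2' \<cdot> z = p2' \<cdot> z'"
      by (metis comp_assoc[OF z v(1) q2] comp_assoc[OF z' v(1) q2] v(3) eq2)
    then show "z = z'" using pullback_lift_unique[OF outer z z' eq1] by blast
  qed
qed

lemma mono_pullback:
  assumes P: "is_pullback C f g p1 p2" and "mono C f"
  shows "mono C p2"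
  unfolding mono_def
proof (intro conjI allI impI)
  note P1 = pullbackD[OF P]
  have f: "hom C f (Dom C f) (Cod C f)" and g: "hom C g (Dom C g) (Cod C f)"
    using hom_Dom_Cod[OF P1(1)] hom_Dom_Cod[OF P1(2)] P1(3) by simp_all
  show "p2 \<in> Arr C" using P1(5) by (simp add: hom_def)
  fix a b
  assume "a \<in> Arr C" "b \<in> Arr C" "Cod C a = Dom C p2" "Cod C b = Dom C p2" "Dom C a = Dom C b"
    and eq: "p2 \<cdot> a = p2 \<cdot> b"
  then have a: "hom C a (Dom C a) (Dom C p1)" and b: "hom C b (Dom C a) (Dom C p1)"
    using P1(5) by (auto simp: hom_def)
  have "f \<cdot> p1 \<cdot> a = f \<cdot> p1 \<cdot> b"
    by (metis comp_assoc[OF a P1(4) f] comp_assoc[OF b P1(4) f] comp_assoc[OF a P1(5) g]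
        comp_assoc[OF b P1(5) g] P1(6) eq)
  then have "p1 \<cdot> a = p1 \<cdot> b"
    using \<open>mono C f\<close> comp_in_hom[OF a P1(4)] comp_in_hom[OF b P1(4)]
    unfolding mono_def hom_def by metis
  then show "a = b" using pullback_lift_unique[OF P a b] eq by blast
qed

lemma pushout_paste:
  assumes "is_pushout C g h q1 q2" "is_pushout C f q1 p1 p2" "hom C f (Cod C g) A"
  shows "is_pushout C (f \<cdot> g) h p1 (p2 \<cdot> q2)"
  using category.pullback_paste[OF category_op_cat, of g h q1 q2 f p1 p2 A] assms
  by (simp add: is_pushout_iff_pullback_op)

lemma pushout_cancel:
  assumes "is_pushout C g h q1 q2" "is_pushout C (f \<cdot> g) h p1 p2'" "hom C f (Cod C g) A"
    "hom C v (Cod C q1) (Cod C p1)" "v \<cdot> q1 = p1 \<cdot> f" "v \<cdot> q2 = p2'"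
  shows "is_pushout C f q1 p1 v"
  using category.pullback_cancel[OF category_op_cat, of g h q1 q2 f p1 p2' A v] assms
  by (simp add: is_pushout_iff_pullback_op)

lemma amended_match:
  assumes "strongly_amendable C" "epi_mono_factorizations C"
    and m: "hom C m L G" and \<alpha>: "hom C \<alpha> G L'"
  obtains e m' tL0 \<beta> \<alpha>' L0 L0' where "hom C e L L0" "hom C m' L0 G" "m = m' \<cdot> e"
    "mono C tL0" "hom C tL0 L0 L0'" "hom C \<beta> L0' L'"
    "hom C \<alpha>' G L0'" "\<alpha>' \<cdot> m' = tL0" "\<beta> \<cdot> \<alpha>' = \<alpha>" "is_pullback C tL0 \<alpha>' (Idt C L0) m'"
proof -
  obtain e m' where "epi C e" "mono C m'" "Cod C e = Dom C m'" and mm': "m = m' \<cdot> e"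
    using assms(2) m unfolding epi_mono_factorizations_def hom_def by blast
  then have "hom C e (Dom C e) (Cod C e)" "hom C m' (Cod C e) (Cod C m')"
    by (simp_all add: epi_def mono_def hom_def)
  moreover from this have "hom C m (Dom C e) (Cod C m')" unfolding mm' by (rule comp_in_hom)
  ultimately have e: "hom C e L (Cod C e)" and m': "hom C m' (Cod C e) G"
    using m by (auto simp: hom_def)
  have t: "(\<alpha> \<cdot> m') \<in> Arr C" "Dom C (\<alpha> \<cdot> m') = Cod C e" "Cod C (\<alpha> \<cdot> m') = L'"
    using comp_in_hom[OF m' \<alpha>] by (simp_all add: hom_def)
  obtain tL0 \<beta> where "mono C tL0" "Dom C tL0 = Cod C e" "hom C \<beta> (Cod C tL0) L'"
    and amend: "\<forall>m'' \<alpha>''. mono C m'' \<and> Dom C m'' = Cod C e \<and> hom C \<alpha>'' (Cod C m'') L' \<and>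
        \<alpha> \<cdot> m' = \<alpha>'' \<cdot> m'' \<longrightarrow> (\<exists>\<alpha>'. hom C \<alpha>' (Cod C m'') (Cod C tL0) \<and> \<alpha>' \<cdot> m'' = tL0 \<and>
        \<beta> \<cdot> \<alpha>' = \<alpha>'' \<and> is_pullback C tL0 \<alpha>' (Idt C (Cod C e)) m'')"
    using assms(1)[unfolded strongly_amendable_def, rule_format, OF t(1)]
    unfolding t(2,3) by blast
  moreover obtain \<alpha>' where "hom C \<alpha>' G (Cod C tL0)" "\<alpha>' \<cdot> m' = tL0" "\<beta> \<cdot> \<alpha>' = \<alpha>"
    "is_pullback C tL0 \<alpha>' (Idt C (Cod C e)) m'"
    using amend[rule_format, of m' \<alpha>] \<open>mono C m'\<close> m' \<alpha> by (auto simp: hom_def)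
  moreover have "hom C tL0 (Cod C e) (Cod C tL0)"
    using \<open>mono C tL0\<close> \<open>Dom C tL0 = Cod C e\<close> by (simp add: mono_def hom_def)
  ultimately show thesis using that e m' mm' \<open>mono C tL0\<close> \<open>hom C \<beta> (Cod C tL0) L'\<close> by blast
qed

lemma match_pullback_comp:
  assumes match: "is_pullback C t \<alpha> (Idt C (Dom C t)) m"
    and left: "is_pullback C \<alpha> p gL u'" and restriction: "is_pullback C t p l tK"
    and v: "hom C v (Dom C l) (Dom C gL)" and "u' \<cdot> v = tK"
  shows "gL \<cdot> v = m \<cdot> l"
proof -
  note M = pullbackD[OF match] and P = pullbackD[OF left] and R = pullbackD[OF restriction]
  have \<alpha>: "hom C \<alpha> (Dom C \<alpha>) (Cod C t)" and p: "hom C p (Dom C p) (Cod C t)"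
    using hom_Dom_Cod[OF M(2)] hom_Dom_Cod[OF R(2)] M(3) R(3) by simp_all
  have "t \<cdot> l = p \<cdot> u' \<cdot> v" using \<open>u' \<cdot> v = tK\<close> R(6) by simp
  also have "\<dots> = (\<alpha> \<cdot> gL) \<cdot> v" using comp_assoc[OF v P(5) p] P(6) by simp
  also have "\<dots> = \<alpha> \<cdot> gL \<cdot> v" using comp_assoc[OF v P(4) \<alpha>] by simp
  finally have "t \<cdot> l = \<alpha> \<cdot> gL \<cdot> v" .
  then obtain z where "hom C z (Dom C l) (Dom C (Idt C (Dom C t)))" "Idt C (Dom C t) \<cdot> z = l"
      "m \<cdot> z = gL \<cdot> v"
    using pullback_lift[OF match hom_Dom_Cod[OF M(1)] \<alpha> R(4) comp_in_hom[OF v P(4)]] by blast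
  moreover have "hom C (Idt C (Dom C t)) (Dom C t) (Dom C t)"
    using Idt_Dom_in_hom[OF hom_Dom_Cod[OF M(1)]] .
  ultimately show ?thesis using comp_Idt_left by (metis hom_def)
qed

end

section \<open>Refining a PBPO rule into PBPO+ rules\<close>

locale pbpo_rule = category C for C :: "('o, 'a) cat" +
  fixes l r tL tK tR l' r' :: 'a and K L R L' K' R' :: 'o
  assumes l: "hom C l K L" and r: "hom C r K R" and tL: "hom C tL L L'"
    and tK: "hom C tK K K'" and tR: "hom C tR R R'" and l': "hom C l' K' L'"
    and r': "hom C r' K' R'" and left_square: "tL \<cdot> l = l' \<cdot> tK"
    and right_square: "tR \<cdot> r = r' \<cdot> tK"
begin

abbreviation the_pbpo_rule :: "'a pbpo_rule" where
  "the_pbpo_rule \<equiv> \<lparr>pl = l, pr = r, ptL = tL, ptK = tK, ptR = tR, pl' = l', pr' = r'\<rparr>"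

lemma pbpo_step_iff:
  "pbpo_step C the_pbpo_rule G H \<longleftrightarrow>
    (\<exists>m \<alpha> gL u' u gR w w'. hom C m L G \<and> hom C \<alpha> G L' \<and> tL = \<alpha> \<cdot> m \<and>
      is_pullback C \<alpha> l' gL u' \<and> hom C u K (Dom C gL) \<and> gL \<cdot> u = m \<cdot> l \<and> u' \<cdot> u = tK \<and>
      is_pushout C u r gR w \<and> Cod C gR = H \<and>
      hom C w' H R' \<and> w' \<cdot> gR = r' \<cdot> u' \<and> w' \<cdot> w = tR)"
  using l r tL tK tR by (simp add: pbpo_step_def hom_def)

end

locale pbpo_refinement = pbpo_rule C l r tL tK tR l' r' K L R L' K' R'
  for C :: "('o, 'a) cat" and l r tL tK tR l' r' :: 'a and K L R L' K' R' :: 'o +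
  fixes e tL0 \<beta> l0' p2 l0 tK0 k r0 kR :: 'a and L0 L0' K0 K0' R0 :: 'o
  assumes e: "hom C e L L0" and tL0: "hom C tL0 L0 L0'" and mono_tL0: "mono C tL0"
    and \<beta>: "hom C \<beta> L0' L'" and tL_factor: "\<beta> \<cdot> tL0 \<cdot> e = tL"
    and pullback_l': "is_pullback C \<beta> l' l0' p2"
    and l0': "hom C l0' K0' L0'" and p2: "hom C p2 K0' K'"
    and pullback_tL0: "is_pullback C tL0 l0' l0 tK0"
    and l0: "hom C l0 K0 L0" and tK0: "hom C tK0 K0 K0'"
    and k: "hom C k K K0" and l0_k: "l0 \<cdot> k = e \<cdot> l" and tK_factor: "p2 \<cdot> tK0 \<cdot> k = tK"
    and pushout_r: "is_pushout C k r r0 kR" and r0: "hom C r0 K0 R0" and kR: "hom C kR R R0"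
begin

abbreviation refined_rule :: "'a pbpop_rule" where
  "refined_rule \<equiv> \<lparr>ql = l0, qr = r0, qtL = tL0, qtK = tK0, ql' = l0'\<rparr>"

lemma is_pbpop_rule_refined_rule: "is_pbpop_rule C refined_rule"
  using l0 r0 tL0 tK0 l0' mono_tL0 mono_pullback[OF pullback_tL0 mono_tL0] pullback_tL0
  by (simp add: is_pbpop_rule_def hom_def)

lemma pbpop_step_iff:
  "pbpop_step C refined_rule G H \<longleftrightarrow>
    (\<exists>\<alpha> m gL u' u gR w. hom C \<alpha> G L0' \<and> hom C m L0 G \<and> is_pullback C tL0 \<alpha> (Idt C L0) m \<and>
      is_pullback C \<alpha> l0' gL u' \<and> hom C u K0 (Dom C gL) \<and> u' \<cdot> u = tK0 \<and>
      (\<forall>v. hom C v K0 (Dom C gL) \<and> u' \<cdot> v = tK0 \<longrightarrow> v = u) \<and>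
      is_pushout C u r0 gR w \<and> Cod C gR = H)"
  using l0 tL0 tK0 by (simp add: pbpop_step_def hom_def)

lemma pbpo_step_if_pbpop_step:
  assumes "pbpop_step C refined_rule G H"
  shows "pbpo_step C the_pbpo_rule G H"
proof -
  obtain \<alpha>0 m0 gL u0' u0 gR w0 where \<alpha>0: "hom C \<alpha>0 G L0'" and m0: "hom C m0 L0 G"
    and match: "is_pullback C tL0 \<alpha>0 (Idt C L0) m0" and pb: "is_pullback C \<alpha>0 l0' gL u0'"
    and u0: "hom C u0 K0 (Dom C gL)" "u0' \<cdot> u0 = tK0"
    and po: "is_pushout C u0 r0 gR w0" and "Cod C gR = H"
    using assms unfolding pbpop_step_iff by blast
  have gL: "hom C gL (Dom C gL) G" and u0': "hom C u0' (Dom C gL) K0'"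
    using pullbackD(4,5)[OF pb] \<alpha>0 l0' by (simp_all add: hom_def)
  have "tL0 = \<alpha>0 \<cdot> m0"
    using pullbackD(6)[OF match] comp_Idt_right[OF tL0] by simp
  then have "tL = (\<beta> \<cdot> \<alpha>0) \<cdot> m0 \<cdot> e"
    using tL_factor comp_assoc[OF comp_in_hom[OF e m0] \<alpha>0 \<beta>] comp_assoc[OF e m0 \<alpha>0] by simp
  moreover have "is_pullback C (\<beta> \<cdot> \<alpha>0) l' gL (p2 \<cdot> u0')"
    using pullback_paste[OF pullback_l' pb] \<alpha>0 \<beta> by (simp add: hom_def)
  moreover have "gL \<cdot> u0 \<cdot> k = (m0 \<cdot> e) \<cdot> l"
  proof -
    have "gL \<cdot> u0 = m0 \<cdot> l0"
      using match_pullback_comp[OF _ pb pullback_tL0] match u0 tL0 l0 by (simp add: hom_def)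
    then show ?thesis
      using comp_assoc[OF k u0(1) gL] comp_assoc[OF k l0 m0] comp_assoc[OF l e m0] l0_k by simp
  qed
  moreover have "(p2 \<cdot> u0') \<cdot> u0 \<cdot> k = tK"
    using comp_assoc[OF comp_in_hom[OF k u0(1)] u0' p2] comp_assoc[OF k u0(1) u0'] u0(2)
      tK_factor by simp
  moreover have po': "is_pushout C (u0 \<cdot> k) r gR (w0 \<cdot> kR)"
    using pushout_paste[OF pushout_r po] u0(1) k by (simp add: hom_def)
  moreover obtain w' where "hom C w' H R'" "w' \<cdot> gR = r' \<cdot> p2 \<cdot> u0'" "w' \<cdot> w0 \<cdot> kR = tR"
  proof (rule pushout_lift[OF po' comp_in_hom[OF k u0(1)] r _ tR])
    show "hom C (r' \<cdot> p2 \<cdot> u0') (Dom C gL) R'"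
      using comp_in_hom[OF comp_in_hom[OF u0' p2] r'] .
    show "(r' \<cdot> p2 \<cdot> u0') \<cdot> u0 \<cdot> k = tR \<cdot> r"
      using comp_assoc[OF comp_in_hom[OF k u0(1)] comp_in_hom[OF u0' p2] r']
        \<open>(p2 \<cdot> u0') \<cdot> u0 \<cdot> k = tK\<close> right_square by simp
  qed (use \<open>Cod C gR = H\<close> pushoutD(4)[OF po'] in auto)
  ultimately show ?thesis
    unfolding pbpo_step_iff
    using comp_in_hom[OF e m0] comp_in_hom[OF \<alpha>0 \<beta>] comp_in_hom[OF k u0(1)] \<open>Cod C gR = H\<close>
    by blast
qed

lemma restricted_match:
  assumes pb: "is_pullback C \<alpha> l' gL u'" and m': "hom C m' L0 G" and \<alpha>': "hom C \<alpha>' G L0'"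
    and "\<alpha>' \<cdot> m' = tL0" "\<beta> \<cdot> \<alpha>' = \<alpha>" and match: "is_pullback C tL0 \<alpha>' (Idt C L0) m'"
  obtains u0' u0 where "is_pullback C \<alpha>' l0' gL u0'" "p2 \<cdot> u0' = u'"
    "hom C u0 K0 (Dom C gL)" "gL \<cdot> u0 = m' \<cdot> l0" "u0' \<cdot> u0 = tK0"
    "\<And>v. hom C v K0 (Dom C gL) \<Longrightarrow> u0' \<cdot> v = tK0 \<Longrightarrow> v = u0"
proof -
  have "hom C \<alpha> G L'" using comp_in_hom[OF \<alpha>' \<beta>] \<open>\<beta> \<cdot> \<alpha>' = \<alpha>\<close> by simp
  then have gL: "hom C gL (Dom C gL) G" and u': "hom C u' (Dom C gL) K'"
    using pullbackD(4,5)[OF pb] l' by (simp_all add: hom_def)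
  have "\<beta> \<cdot> \<alpha>' \<cdot> gL = l' \<cdot> u'"
    using comp_assoc[OF gL \<alpha>' \<beta>] pullbackD(6)[OF pb] \<open>\<beta> \<cdot> \<alpha>' = \<alpha>\<close> by simp
  then obtain u0' where "hom C u0' (Dom C gL) (Dom C l0')" "l0' \<cdot> u0' = \<alpha>' \<cdot> gL"
    "p2 \<cdot> u0' = u'"
    using pullback_lift[OF pullback_l' \<beta> l' comp_in_hom[OF gL \<alpha>'] u'] by blast
  then have u0': "hom C u0' (Dom C gL) K0'" "l0' \<cdot> u0' = \<alpha>' \<cdot> gL" "p2 \<cdot> u0' = u'"
    using l0' by (simp_all add: hom_def)
  have pb0: "is_pullback C \<alpha>' l0' gL u0'"
    using pullback_cancel[OF pullback_l' _ _ _ u0'(2,3)] pb u0'(1) \<alpha>' \<beta> l0'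
      \<open>\<beta> \<cdot> \<alpha>' = \<alpha>\<close> by (simp add: hom_def)
  have "\<alpha>' \<cdot> m' \<cdot> l0 = l0' \<cdot> tK0"
    using comp_assoc[OF l0 m' \<alpha>'] \<open>\<alpha>' \<cdot> m' = tL0\<close> pullbackD(6)[OF pullback_tL0] by simp
  then obtain u0 where u0: "hom C u0 K0 (Dom C gL)" "gL \<cdot> u0 = m' \<cdot> l0" "u0' \<cdot> u0 = tK0"
    using pullback_lift[OF pb0 \<alpha>' l0' comp_in_hom[OF l0 m'] tK0] by blast
  have "v = u0" if v: "hom C v K0 (Dom C gL)" "u0' \<cdot> v = tK0" for v
  proof (rule pullback_lift_unique[OF pb0 _ u0(1)])
    show "gL \<cdot> v = gL \<cdot> u0"
      using match_pullback_comp[OF _ pb0 pullback_tL0] match v tL0 l0 u0(2)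
      by (simp add: hom_def)
  qed (use v u0 in simp_all)
  then show thesis using that pb0 u0'(3) u0 by blast
qed

lemma pbpop_step_if_amended_pbpo_step:
  assumes pb: "is_pullback C \<alpha> l' gL u'"
    and u: "hom C u K (Dom C gL)" "gL \<cdot> u = (m' \<cdot> e) \<cdot> l" "u' \<cdot> u = tK"
    and po: "is_pushout C u r gR w" and "Cod C gR = H"
    and m': "hom C m' L0 G" and \<alpha>': "hom C \<alpha>' G L0'" "\<alpha>' \<cdot> m' = tL0" "\<beta> \<cdot> \<alpha>' = \<alpha>"
    and match: "is_pullback C tL0 \<alpha>' (Idt C L0) m'"
  shows "pbpop_step C refined_rule G H"
proof -
  obtain u0' u0 where pb0: "is_pullback C \<alpha>' l0' gL u0'" and "p2 \<cdot> u0' = u'"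
    and u0: "hom C u0 K0 (Dom C gL)" "gL \<cdot> u0 = m' \<cdot> l0" "u0' \<cdot> u0 = tK0"
    and unique: "\<And>v. hom C v K0 (Dom C gL) \<Longrightarrow> u0' \<cdot> v = tK0 \<Longrightarrow> v = u0"
    using restricted_match[OF pb m' \<alpha>' match] by blast
  have gL: "hom C gL (Dom C gL) G" and u0': "hom C u0' (Dom C gL) K0'"
    using pullbackD(4,5)[OF pb0] \<alpha>' l0' by (simp_all add: hom_def)
  have "u0 \<cdot> k = u"
  proof (rule pullback_lift_unique[OF pb comp_in_hom[OF k u0(1)] u(1)])
    show "gL \<cdot> u0 \<cdot> k = gL \<cdot> u"
      using comp_assoc[OF k u0(1) gL] u0(2) comp_assoc[OF k l0 m'] l0_k comp_assoc[OF l e m'] u(2)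
      by simp
    show "u' \<cdot> u0 \<cdot> k = u' \<cdot> u"
      using \<open>p2 \<cdot> u0' = u'\<close> comp_assoc[OF comp_in_hom[OF k u0(1)] u0' p2]
        comp_assoc[OF k u0(1) u0'] u0(3) tK_factor u(3) by simp
  qed
  have gR: "hom C gR (Dom C gL) (Cod C gR)" and w: "hom C w R (Cod C gR)"
    using pushoutD(4,5)[OF po] u(1) r by (simp_all add: hom_def)
  have "(gR \<cdot> u0) \<cdot> k = w \<cdot> r"
    using comp_assoc[OF k u0(1) gR] \<open>u0 \<cdot> k = u\<close> pushoutD(6)[OF po] by simp
  then obtain w0 where "hom C w0 (Cod C r0) (Cod C gR)" "w0 \<cdot> r0 = gR \<cdot> u0" "w0 \<cdot> kR = w"
    using pushout_lift[OF pushout_r k r comp_in_hom[OF u0(1) gR] w] by blast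
  then have w0: "hom C w0 R0 (Cod C gR)" "w0 \<cdot> r0 = gR \<cdot> u0" "w0 \<cdot> kR = w"
    using r0 by (simp_all add: hom_def)
  have "is_pushout C u0 r0 gR w0"
    using pushout_cancel[OF pushout_r _ _ _ w0(2,3)] po \<open>u0 \<cdot> k = u\<close> u0(1) w0(1) k r0
    by (simp add: hom_def)
  then show ?thesis
    unfolding pbpop_step_iff using \<alpha>' m' match pb0 u0(1,3) unique \<open>Cod C gR = H\<close> by blast
qed

end

context pbpo_rule
begin

lemma refinement_exists:
  assumes "has_pullbacks C" "has_pushouts C"
    and e: "hom C e L L0" and tL0: "hom C tL0 L0 L0'" "mono C tL0" and \<beta>: "hom C \<beta> L0' L'"
    and tL_factor: "\<beta> \<cdot> tL0 \<cdot> e = tL"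
  obtains l0' p2 l0 tK0 k r0 kR K0 K0' R0 where "pbpo_refinement C l r tL tK tR l' r'
    K L R L' K' R' e tL0 \<beta> l0' p2 l0 tK0 k r0 kR L0 L0' K0 K0' R0"
proof -
  obtain l0' p2 where pb1: "is_pullback C \<beta> l' l0' p2"
    using has_pullbacksE[OF assms(1) \<beta> l'] .
  define K0' where "K0' = Dom C l0'"
  have l0': "hom C l0' K0' L0'" and p2: "hom C p2 K0' K'"
    using pullbackD(4,5)[OF pb1] \<beta> l' by (simp_all add: hom_def K0'_def)
  obtain l0 tK0 where pb2: "is_pullback C tL0 l0' l0 tK0"
    using has_pullbacksE[OF assms(1) tL0(1) l0'] .
  define K0 where "K0 = Dom C l0"
  have l0: "hom C l0 K0 L0" and tK0: "hom C tK0 K0 K0'"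
    using pullbackD(4,5)[OF pb2] tL0 l0' by (simp_all add: hom_def K0_def)
  have "\<beta> \<cdot> tL0 \<cdot> e \<cdot> l = l' \<cdot> tK"
    using left_square tL_factor comp_assoc[OF l comp_in_hom[OF e tL0(1)] \<beta>]
      comp_assoc[OF l e tL0(1)] by simp
  then obtain kK where kK: "hom C kK K K0'" "l0' \<cdot> kK = tL0 \<cdot> e \<cdot> l" "p2 \<cdot> kK = tK"
    using pullback_lift[OF pb1 \<beta> l' comp_in_hom[OF comp_in_hom[OF l e] tL0(1)] tK]
    by (auto simp: K0'_def)
  then obtain k where k: "hom C k K K0" "l0 \<cdot> k = e \<cdot> l" "tK0 \<cdot> k = kK"
    using pullback_lift[OF pb2 tL0(1) l0' comp_in_hom[OF l e] kK(1)] by (auto simp: K0_def)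
  obtain r0 kR where po: "is_pushout C k r r0 kR"
    using has_pushoutsE[OF assms(2) k(1) r] .
  have r0: "hom C r0 K0 (Cod C r0)" and kR: "hom C kR R (Cod C r0)"
    using pushoutD(4,5)[OF po] k(1) r by (simp_all add: hom_def)
  show thesis
  proof (rule that[of l0' p2 l0 tK0 k r0 kR K0 K0' "Cod C r0"], unfold_locales)
  qed (use e tL0 \<beta> tL_factor pb1 l0' p2 pb2 l0 tK0 k kK po r0 kR in auto)
qed

definition refinements :: "'a pbpop_rule set" where
  "refinements = {\<lparr>ql = l0, qr = r0, qtL = tL0, qtK = tK0, ql' = l0'\<rparr> |
     e tL0 \<beta> l0' p2 l0 tK0 k r0 kR L0 L0' K0 K0' R0. pbpo_refinement C l r tL tK tR l' r'
       K L R L' K' R' e tL0 \<beta> l0' p2 l0 tK0 k r0 kR L0 L0' K0 K0' R0}"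

lemma refinementsE:
  assumes "\<tau> \<in> refinements"
  obtains e tL0 \<beta> l0' p2 l0 tK0 k r0 kR L0 L0' K0 K0' R0
  where "pbpo_refinement C l r tL tK tR l' r' K L R L' K' R' e tL0 \<beta> l0' p2 l0 tK0 k r0 kR
      L0 L0' K0 K0' R0"
    and "\<tau> = \<lparr>ql = l0, qr = r0, qtL = tL0, qtK = tK0, ql' = l0'\<rparr>"
  using assms unfolding refinements_def mem_Collect_eq by (elim exE conjE) (rule that)

lemma refinementsI:
  assumes "pbpo_refinement C l r tL tK tR l' r' K L R L' K' R' e tL0 \<beta> l0' p2 l0 tK0 k r0 kR
      L0 L0' K0 K0' R0"
  shows "\<lparr>ql = l0, qr = r0, qtL = tL0, qtK = tK0, ql' = l0'\<rparr> \<in> refinements"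
  unfolding refinements_def mem_Collect_eq by (intro exI conjI, rule refl, rule assms)

lemma is_pbpop_rule_if_refinement: "\<tau> \<in> refinements \<Longrightarrow> is_pbpop_rule C \<tau>"
  by (elim refinementsE) (simp add: pbpo_refinement.is_pbpop_rule_refined_rule)

lemma pbpo_step_if_refinement_step:
  "\<tau> \<in> refinements \<Longrightarrow> pbpop_step C \<tau> G H \<Longrightarrow> pbpo_step C the_pbpo_rule G H"
  by (elim refinementsE) (simp add: pbpo_refinement.pbpo_step_if_pbpop_step)

lemma refinement_step_if_pbpo_step:
  assumes "has_pullbacks C" "has_pushouts C" "strongly_amendable C" "epi_mono_factorizations C"
    and "pbpo_step C the_pbpo_rule G H"
  shows "\<exists>\<tau>\<in>refinements. pbpop_step C \<tau> G H"
proof -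
  obtain m \<alpha> gL u' u gR w where m: "hom C m L G" and \<alpha>: "hom C \<alpha> G L'" "tL = \<alpha> \<cdot> m"
    and pb: "is_pullback C \<alpha> l' gL u'"
    and u: "hom C u K (Dom C gL)" "gL \<cdot> u = m \<cdot> l" "u' \<cdot> u = tK"
    and po: "is_pushout C u r gR w" "Cod C gR = H"
    using assms(5) unfolding pbpo_step_iff by blast
  obtain e m' tL0 \<beta> \<alpha>' L0 L0' where e: "hom C e L L0" and m': "hom C m' L0 G" "m = m' \<cdot> e"
    and tL0: "mono C tL0" "hom C tL0 L0 L0'" and \<beta>: "hom C \<beta> L0' L'"
    and \<alpha>': "hom C \<alpha>' G L0'" "\<alpha>' \<cdot> m' = tL0" "\<beta> \<cdot> \<alpha>' = \<alpha>"
    and match: "is_pullback C tL0 \<alpha>' (Idt C L0) m'"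
    by (rule amended_match[OF assms(3,4) m \<alpha>(1)])
  have "\<beta> \<cdot> tL0 \<cdot> e = tL"
    using \<alpha>(2) m'(2) \<alpha>'(2,3) comp_assoc[OF e m'(1) \<alpha>'(1)]
      comp_assoc[OF comp_in_hom[OF e m'(1)] \<alpha>'(1) \<beta>] by simp
  then obtain l0' p2 l0 tK0 k r0 kR K0 K0' R0 where refinement:
      "pbpo_refinement C l r tL tK tR l' r' K L R L' K' R' e tL0 \<beta> l0' p2 l0 tK0 k r0 kR
        L0 L0' K0 K0' R0"
    by (rule refinement_exists[OF assms(1,2) e tL0(2,1) \<beta>])
  moreover have "pbpop_step C \<lparr>ql = l0, qr = r0, qtL = tL0, qtK = tK0, ql' = l0'\<rparr> G H"
    using pbpo_refinement.pbpop_step_if_amended_pbpo_step[OF refinement pb u(1) _ u(3) po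
        m'(1) \<alpha>' match] u(2) m'(2) by simp
  ultimately show ?thesis by (blast intro: refinementsI)
qed

end

lemma pbpo_rule_if_is_pbpo_rule:
  assumes "is_category C"
    and "is_pbpo_rule C \<lparr>pl = l, pr = r, ptL = tL, ptK = tK, ptR = tR, pl' = l', pr' = r'\<rparr>"
  shows "pbpo_rule C l r tL tK tR l' r'
    (Dom C l) (Cod C l) (Cod C r) (Cod C tL) (Cod C tK) (Cod C tR)"
  using assms unfolding is_pbpo_rule_def pbpo_rule_def pbpo_rule_axioms_def category_def
  by (simp add: hom_def Let_def)

theorem theorem1:
  fixes C :: "('o, 'a) cat" and \<rho> :: "'a pbpo_rule"
  assumes "is_category C"
    and "has_pullbacks C"
    and "has_pushouts C"
    and "strongly_amendable C"
    and "epi_mono_factorizations C"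
    and "is_pbpo_rule C \<rho>"
  shows "\<exists>T :: 'a pbpop_rule set. (\<forall>\<tau>\<in>T. is_pbpop_rule C \<tau>) \<and>
           (\<forall>GL GR. pbpo_step C \<rho> GL GR \<longleftrightarrow> (\<exists>\<tau>\<in>T. pbpop_step C \<tau> GL GR))"
proof -
  obtain l r tL tK tR l' r'
    where \<rho>: "\<rho> = \<lparr>pl = l, pr = r, ptL = tL, ptK = tK, ptR = tR, pl' = l', pr' = r'\<rparr>"
    by (cases \<rho>) simp
  interpret pbpo_rule C l r tL tK tR l' r'
    "Dom C l" "Cod C l" "Cod C r" "Cod C tL" "Cod C tK" "Cod C tR"
    using pbpo_rule_if_is_pbpo_rule[OF assms(1) assms(6)[unfolded \<rho>]] .
  have "pbpo_step C \<rho> G H \<longleftrightarrow> (\<exists>\<tau>\<in>refinements. pbpop_step C \<tau> G H)" for G H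
    unfolding \<rho> using pbpo_step_if_refinement_step refinement_step_if_pbpo_step[OF assms(2-5)]
    by blast
  then show ?thesis using is_pbpop_rule_if_refinement by blast
qed

end
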